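(* Let $f_1(z)=e^z+z$, $f_2(z)=e^z+1$ and $F(z)=e^z$. Then $$\mathrm{tr.deg}_{\mathbb{C}}\,\mathbb{C}\big(f_1,f_2,F(f_1),F(f_2)\big)=3 .$$
   Context: $F(f_i)=F\circ f_i$; $\mathrm{tr.deg}_{\mathbb{C}}\,\mathbb{C}(g_1,\dots,g_k)$ is the transcendence degree over $\mathbb{C}$ of the field generated over $\mathbb{C}$ by the entire functions $g_1,\dots,g_k$. *)

theory Defs
  imports "HOL-Analysis.Analysis"
begin

text \<open>Polynomials in the variables x_0,...,x_(n-1) with complex coefficients,
  represented as finitely supported coefficient functions on exponent vectors.\<close>
definition is_mpoly :: "nat \<Rightarrow> ((nat \<Rightarrow> nat) \<Rightarrow> complex) \<Rightarrow> bool" where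
  "is_mpoly n P \<longleftrightarrow> finite {a. P a \<noteq> 0} \<and> (\<forall>a. P a \<noteq> 0 \<longrightarrow> (\<forall>i\<ge>n. a i = 0))"

definition mpoly_eval :: "nat \<Rightarrow> ((nat \<Rightarrow> nat) \<Rightarrow> complex) \<Rightarrow> (nat \<Rightarrow> complex) \<Rightarrow> complex" where
  "mpoly_eval n P x = (\<Sum>a\<in>{a. P a \<noteq> 0}. P a * (\<Prod>i<n. x i ^ a i))"

text \<open>The field C(g_0,...,g_(n-1)) generated over C by functions g_i, realised as
  the set of quotients P(g)/Q(g) with Q(g) not identically zero (pointwise, with
  the convention x/0 = 0 at the isolated poles).\<close>
definition gen_field :: "nat \<Rightarrow> (nat \<Rightarrow> complex \<Rightarrow> complex) \<Rightarrow> (complex \<Rightarrow> complex) set" where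
  "gen_field n g = {(\<lambda>z. mpoly_eval n P (\<lambda>i. g i z) / mpoly_eval n Q (\<lambda>i. g i z)) | P Q.
      is_mpoly n P \<and> is_mpoly n Q \<and> (\<exists>z. mpoly_eval n Q (\<lambda>i. g i z) \<noteq> 0)}"

text \<open>A meromorphic function vanishes identically iff
  it is nonzero only on a countable set (poles/representative ambiguity are countable).\<close>
definition alg_indep :: "nat \<Rightarrow> (nat \<Rightarrow> complex \<Rightarrow> complex) \<Rightarrow> bool" where
  "alg_indep m h \<longleftrightarrow> (\<forall>P. is_mpoly m P \<and> (\<exists>a. P a \<noteq> 0) \<longrightarrow>
      uncountable {z. mpoly_eval m P (\<lambda>i. h i z) \<noteq> 0})"

definition trdeg :: "nat \<Rightarrow> (nat \<Rightarrow> complex \<Rightarrow> complex) \<Rightarrow> nat" where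
  "trdeg n g = Sup {m. \<exists>h. (\<forall>i<m. h i \<in> gen_field n g) \<and> alg_indep m h}"

end

theory Submission
  imports Defs "HOL-Library.Function_Algebras" "HOL-Complex_Analysis.Complex_Analysis"
begin

(* All four generators are polynomials in z, e^z and e^(e^z), and conversely z = f1 - f2 + 1,
   e^z = f2 - 1 and e^(e^z) = F(f2)/e, so the field is C(z, e^z, e^(e^z)).
   Upper bound: if h_0, ..., h_k are quotients N_i/D_i of polynomials of degree <= e in k fixed
   functions, the (n+1)^(k+1) homogenised monomials prod_i N_i^(a_i) D_i^(n - a_i), a_i <= n, lie
   in the span of the ((k+1)ne + 1)^k monomials of degree <= (k+1)ne in those functions.  For large
   n there are more of the former, so a nontrivial linear relation among them exists, and dividing
   by (prod_i D_i)^n turns it into a polynomial relation among the h_i.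
   Lower bound: on the positive real axis the monomial t^i e^(jt) e^(k e^t) with (k, j, i)
   lexicographically largest dominates all others, so no nonzero polynomial in z, e^z, e^(e^z)
   vanishes there. *)

section \<open>Spaces of polynomial functions\<close>

definition exp_box :: "nat \<Rightarrow> nat \<Rightarrow> (nat \<Rightarrow> nat) set" where
  "exp_box k d = {a. (\<forall>i<k. a i \<le> d) \<and> (\<forall>i\<ge>k. a i = 0)}"

lemma bij_betw_exp_box_PiE:
  "bij_betw (\<lambda>a. restrict a {..<k}) (exp_box k d) (\<Pi>\<^sub>E i\<in>{..<k}. {..d})"
proof (rule bij_betw_byWitness[where f' = "\<lambda>f i. if i < k then f i else 0"])
  show "\<forall>a\<in>exp_box k d. (\<lambda>i. if i < k then restrict a {..<k} i else 0) = a"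
    by (auto simp: exp_box_def fun_eq_iff)
  show "\<forall>f\<in>\<Pi>\<^sub>E i\<in>{..<k}. {..d}. restrict (\<lambda>i. if i < k then f i else 0) {..<k} = f"
    by (auto simp: fun_eq_iff PiE_def extensional_def)
qed (auto simp: exp_box_def PiE_def extensional_def)

lemma finite_exp_box: "finite (exp_box k d)"
  using bij_betw_finite[OF bij_betw_exp_box_PiE] by (simp add: finite_PiE)

lemma card_exp_box: "card (exp_box k d) = (d + 1) ^ k"
  using bij_betw_same_card[OF bij_betw_exp_box_PiE] by (simp add: card_PiE)

lemma exp_box_add:
  "a \<in> exp_box k d \<Longrightarrow> b \<in> exp_box k d' \<Longrightarrow> (\<lambda>i. a i + b i) \<in> exp_box k (d + d')"
  by (auto simp: exp_box_def add_mono)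

lemma exp_box_mono: "d \<le> d' \<Longrightarrow> exp_box k d \<subseteq> exp_box k d'"
  by (auto simp: exp_box_def)

interpretation fun_vs: vector_space "\<lambda>c (f :: 'a \<Rightarrow> complex) z. c * f z"
  by unfold_locales (auto simp: fun_eq_iff algebra_simps)

definition monomial_fun :: "nat \<Rightarrow> (nat \<Rightarrow> 'a \<Rightarrow> complex) \<Rightarrow> (nat \<Rightarrow> nat) \<Rightarrow> 'a \<Rightarrow> complex" where
  "monomial_fun k u a = (\<lambda>z. \<Prod>i<k. u i z ^ a i)"

definition poly_span :: "nat \<Rightarrow> (nat \<Rightarrow> 'a \<Rightarrow> complex) \<Rightarrow> nat \<Rightarrow> ('a \<Rightarrow> complex) set" where
  "poly_span k u d = fun_vs.span (monomial_fun k u ` exp_box k d)"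

lemma monomial_fun_mult:
  "monomial_fun k u (\<lambda>i. a i + b i) = (\<lambda>z. monomial_fun k u a z * monomial_fun k u b z)"
  by (simp add: monomial_fun_def fun_eq_iff power_add prod.distrib)

lemma monomial_in_poly_span: "a \<in> exp_box k d \<Longrightarrow> monomial_fun k u a \<in> poly_span k u d"
  unfolding poly_span_def by (intro fun_vs.span_base imageI)

lemma poly_span_mono: "d \<le> d' \<Longrightarrow> poly_span k u d \<subseteq> poly_span k u d'"
  unfolding poly_span_def by (intro fun_vs.span_mono image_mono exp_box_mono)

lemma poly_span_zero: "(\<lambda>z. 0) \<in> poly_span k u d"
  unfolding poly_span_def using fun_vs.span_zero by (simp add: zero_fun_def)

lemma poly_span_add: "f \<in> poly_span k u d \<Longrightarrow> g \<in> poly_span k u d \<Longrightarrow> (\<lambda>z. f z + g z) \<in> poly_span k u d"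
  unfolding poly_span_def using fun_vs.span_add by (auto simp: plus_fun_def)

lemma poly_span_scale: "f \<in> poly_span k u d \<Longrightarrow> (\<lambda>z. c * f z) \<in> poly_span k u d"
  unfolding poly_span_def by (rule fun_vs.span_scale)

lemma poly_span_const: "(\<lambda>z. c) \<in> poly_span k u d"
proof -
  have "monomial_fun k u (\<lambda>_. 0) \<in> poly_span k u d"
    by (rule monomial_in_poly_span) (simp add: exp_box_def)
  from poly_span_scale[OF this, of c] show ?thesis by (simp add: monomial_fun_def)
qed

lemma poly_span_sum:
  "finite A \<Longrightarrow> (\<And>a. a \<in> A \<Longrightarrow> f a \<in> poly_span k u d) \<Longrightarrow> (\<lambda>z. \<Sum>a\<in>A. f a z) \<in> poly_span k u d"
  by (induction A rule: finite_induct) (auto intro: poly_span_add poly_span_zero)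

lemma poly_span_mult_monomial:
  assumes "g \<in> poly_span k u d'" "a \<in> exp_box k d"
  shows "(\<lambda>z. monomial_fun k u a z * g z) \<in> poly_span k u (d + d')"
  using assms(1) unfolding poly_span_def
proof (induction rule: fun_vs.span_induct_alt)
  case base
  show ?case using fun_vs.span_zero by (simp add: zero_fun_def)
next
  case (step c x y)
  then obtain b where b: "x = monomial_fun k u b" "b \<in> exp_box k d'" by auto
  have "(\<lambda>z. monomial_fun k u a z * x z) \<in> poly_span k u (d + d')"
    using b monomial_in_poly_span[OF exp_box_add[OF assms(2) b(2)]] by (simp add: monomial_fun_mult)
  with step(2) show ?case unfolding poly_span_def
    by (auto simp: algebra_simps intro!: fun_vs.span_add[unfolded plus_fun_def] fun_vs.span_scale)
qed

lemma poly_span_mult: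
  assumes "f \<in> poly_span k u d" "g \<in> poly_span k u d'"
  shows "(\<lambda>z. f z * g z) \<in> poly_span k u (d + d')"
  using assms(1) unfolding poly_span_def
proof (induction rule: fun_vs.span_induct_alt)
  case base
  show ?case using fun_vs.span_zero by (simp add: zero_fun_def)
next
  case (step c x y)
  then obtain a where "x = monomial_fun k u a" "a \<in> exp_box k d" by auto
  then have "(\<lambda>z. x z * g z) \<in> poly_span k u (d + d')"
    using poly_span_mult_monomial[OF assms(2)] by simp
  with step(2) show ?case unfolding poly_span_def
    by (auto simp: algebra_simps intro!: fun_vs.span_add[unfolded plus_fun_def] fun_vs.span_scale)
qed

lemma poly_span_prod:
  "finite A \<Longrightarrow> (\<And>a. a \<in> A \<Longrightarrow> f a \<in> poly_span k u (e a)) \<Longrightarrow>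
    (\<lambda>z. \<Prod>a\<in>A. f a z) \<in> poly_span k u (\<Sum>a\<in>A. e a)"
proof (induction A rule: finite_induct)
  case empty
  show ?case using poly_span_const[of 1] by simp
next
  case (insert x F)
  then show ?case using poly_span_mult[of "f x" k u "e x"] by simp
qed

lemma poly_span_power: "f \<in> poly_span k u d \<Longrightarrow> (\<lambda>z. f z ^ n) \<in> poly_span k u (n * d)"
  using poly_span_prod[of "{..<n}" "\<lambda>_. f" k u "\<lambda>_. d"] by simp

lemma poly_span_var:
  assumes "i < k"
  shows "u i \<in> poly_span k u 1"
proof -
  define a where "a = (\<lambda>j. if j = i then 1 else 0 :: nat)"
  have "a \<in> exp_box k 1" using assms by (simp add: a_def exp_box_def)
  moreover have "monomial_fun k u a = u i"
    using assms by (simp add: monomial_fun_def a_def fun_eq_iff if_distrib prod.delta cong: if_cong)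
  ultimately show ?thesis using monomial_in_poly_span by metis
qed

lemma card_monomial_image_le: "card (monomial_fun k u ` exp_box k d) \<le> (d + 1) ^ k"
  using card_image_le[OF finite_exp_box] by (simp add: card_exp_box)

definition poly_funs :: "nat \<Rightarrow> (nat \<Rightarrow> 'a \<Rightarrow> complex) \<Rightarrow> ('a \<Rightarrow> complex) set" where
  "poly_funs k u = (\<Union>d. poly_span k u d)"

lemma poly_funs_common_degree:
  fixes f :: "nat \<Rightarrow> 'a \<Rightarrow> complex"
  assumes "\<forall>i<m. f i \<in> poly_funs k u"
  shows "\<exists>e. \<forall>i<m. f i \<in> poly_span k u e"
proof -
  from assms have "\<forall>i<m. \<exists>d. f i \<in> poly_span k u d" by (simp add: poly_funs_def)
  then obtain d where d: "\<And>i. i < m \<Longrightarrow> f i \<in> poly_span k u (d i)" by metis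
  have "f i \<in> poly_span k u (\<Sum>j<m. d j)" if "i < m" for i
  proof -
    have "d i \<le> (\<Sum>j<m. d j)" using that by (intro member_le_sum) auto
    with d[OF that] show ?thesis using poly_span_mono by blast
  qed
  then show ?thesis by blast
qed

section \<open>Transcendence degree of fields generated by polynomial functions\<close>

lemma sum_fun_apply: "(\<Sum>v\<in>T. f v) z = (\<Sum>v\<in>T. f v z)"
  by (induction T rule: infinite_finite_induct) auto

lemma vanishing_combination_if_card_gt:
  fixes \<Phi> :: "'b \<Rightarrow> 'a \<Rightarrow> complex"
  assumes "finite A" "finite B" "card B < card A" "\<Phi> ` A \<subseteq> fun_vs.span B"
  shows "\<exists>c. (\<exists>a\<in>A. c a \<noteq> 0) \<and> (\<forall>z. (\<Sum>a\<in>A. c a * \<Phi> a z) = 0)"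
proof (cases "inj_on \<Phi> A")
  case False
  then obtain a1 a2 where a: "a1 \<in> A" "a2 \<in> A" "a1 \<noteq> a2" "\<Phi> a1 = \<Phi> a2"
    by (auto simp: inj_on_def)
  define c where "c a = (if a = a1 then 1 else if a = a2 then -1 else (0::complex))" for a
  have "(\<Sum>a\<in>A. c a * \<Phi> a z) = 0" for z
  proof -
    have "(\<Sum>a\<in>A. c a * \<Phi> a z) = (\<Sum>a\<in>A. (if a = a1 then \<Phi> a z else 0) - (if a = a2 then \<Phi> a z else 0))"
      using a by (intro sum.cong) (auto simp: c_def)
    then show ?thesis using a assms(1) by (simp add: sum_subtractf)
  qed
  with a show ?thesis by (intro exI[of _ c]) (auto simp: c_def)
next
  case True
  have "\<not> fun_vs.independent (\<Phi> ` A)"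
    using fun_vs.independent_span_bound[OF assms(2) _ assms(4)] True assms(3)
    by (auto simp: card_image)
  then obtain t v where t: "finite t" "t \<subseteq> \<Phi> ` A" "(\<Sum>f\<in>t. (\<lambda>z. v f * f z)) = 0" "\<exists>f\<in>t. v f \<noteq> 0"
    unfolding fun_vs.dependent_explicit by blast
  define c where "c a = (if \<Phi> a \<in> t then v (\<Phi> a) else 0)" for a
  have "(\<Sum>a\<in>A. c a * \<Phi> a z) = 0" for z
  proof -
    have "(\<Sum>a\<in>A. c a * \<Phi> a z) = (\<Sum>a\<in>{a\<in>A. \<Phi> a \<in> t}. v (\<Phi> a) * \<Phi> a z)"
      using assms(1) by (auto simp: c_def sum.inter_filter intro!: sum.cong)
    also have "\<dots> = (\<Sum>f\<in>t. v f * f z)"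
      using True t(2) by (subst sum.reindex_bij_betw[symmetric, where h = \<Phi>])
        (auto simp: bij_betw_def intro: inj_on_subset)
    also have "\<dots> = (\<Sum>f\<in>t. (\<lambda>z. v f * f z)) z"
      by (simp add: sum_fun_apply)
    finally show ?thesis using t(3) by simp
  qed
  moreover obtain a where "a \<in> A" "c a \<noteq> 0" using t(2,4) by (auto simp: c_def)
  ultimately show ?thesis by blast
qed

lemma mpoly_eval_superset:
  assumes "finite S" "{a. P a \<noteq> 0} \<subseteq> S"
  shows "mpoly_eval n P x = (\<Sum>a\<in>S. P a * (\<Prod>i<n. x i ^ a i))"
  unfolding mpoly_eval_def using assms by (intro sum.mono_neutral_left) auto

lemma mpoly_eval_holomorphic:
  "(\<And>i. i < n \<Longrightarrow> g i holomorphic_on S) \<Longrightarrow> (\<lambda>z. mpoly_eval n P (\<lambda>i. g i z)) holomorphic_on S"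
  unfolding mpoly_eval_def by (intro holomorphic_intros) auto

lemma mpoly_eval_in_poly_funs:
  assumes "is_mpoly n P" "\<forall>i<n. g i \<in> poly_funs k u"
  shows "(\<lambda>z. mpoly_eval n P (\<lambda>i. g i z)) \<in> poly_funs k u"
proof -
  obtain e where e: "\<forall>i<n. g i \<in> poly_span k u e"
    using poly_funs_common_degree[OF assms(2)] by blast
  define S where "S = {a. P a \<noteq> 0}"
  have "finite S" using assms(1) by (simp add: is_mpoly_def S_def)
  have "(\<lambda>z. \<Prod>i<n. g i z ^ a i) \<in> poly_span k u (\<Sum>b\<in>S. \<Sum>i<n. b i * e)" if "a \<in> S" for a
  proof -
    have "(\<lambda>z. \<Prod>i<n. g i z ^ a i) \<in> poly_span k u (\<Sum>i<n. a i * e)"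
      using e by (intro poly_span_prod poly_span_power) auto
    moreover have "(\<Sum>i<n. a i * e) \<le> (\<Sum>b\<in>S. \<Sum>i<n. b i * e)"
      using \<open>finite S\<close> that by (intro member_le_sum) auto
    ultimately show ?thesis using poly_span_mono by blast
  qed
  then have "(\<lambda>z. \<Sum>a\<in>S. P a * (\<Prod>i<n. g i z ^ a i)) \<in> poly_span k u (\<Sum>b\<in>S. \<Sum>i<n. b i * e)"
    using \<open>finite S\<close> by (intro poly_span_sum poly_span_scale) auto
  then show ?thesis unfolding poly_funs_def mpoly_eval_def S_def by blast
qed

lemma countable_zeros_entire:
  assumes "f holomorphic_on UNIV" "f z0 \<noteq> 0"
  shows "countable {z. f z = 0}"
proof (cases "f constant_on UNIV")
  case True
  then have "{z. f z = 0} = {}" using assms(2) by (auto simp: constant_on_def)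
  then show ?thesis by simp
next
  case False
  then show ?thesis using holomorphic_countable_zeros[OF assms(1)] by (simp add: connected_UNIV)
qed

lemma gen_field_fraction:
  assumes "f \<in> gen_field n g" "\<forall>i<n. g i holomorphic_on UNIV \<and> g i \<in> poly_funs k u"
  shows "\<exists>N D. f = (\<lambda>z. N z / D z) \<and> N \<in> poly_funs k u \<and> D \<in> poly_funs k u \<and>
    D holomorphic_on UNIV \<and> (\<exists>z. D z \<noteq> 0)"
proof -
  obtain P Q where "f = (\<lambda>z. mpoly_eval n P (\<lambda>i. g i z) / mpoly_eval n Q (\<lambda>i. g i z))"
    "is_mpoly n P" "is_mpoly n Q" "\<exists>z. mpoly_eval n Q (\<lambda>i. g i z) \<noteq> 0"
    using assms(1) unfolding gen_field_def by blast
  with assms(2) show ?thesis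
    by (intro exI[of _ "\<lambda>z. mpoly_eval n P (\<lambda>i. g i z)"] exI[of _ "\<lambda>z. mpoly_eval n Q (\<lambda>i. g i z)"])
      (auto intro!: mpoly_eval_in_poly_funs mpoly_eval_holomorphic)
qed

lemma gen_field_common_fractions:
  fixes h :: "nat \<Rightarrow> complex \<Rightarrow> complex"
  assumes "\<forall>i<n. g i holomorphic_on UNIV \<and> g i \<in> poly_funs k u" "\<forall>i<K. h i \<in> gen_field n g"
  shows "\<exists>N D e. \<forall>i<K. h i = (\<lambda>z. N i z / D i z) \<and> N i \<in> poly_span k u e \<and> D i \<in> poly_span k u e \<and>
    D i holomorphic_on UNIV \<and> (\<exists>z. D i z \<noteq> 0)"
proof -
  have "\<forall>i. \<exists>N D. i < K \<longrightarrow> h i = (\<lambda>z. N z / D z) \<and> N \<in> poly_funs k u \<and> D \<in> poly_funs k u \<and>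
    D holomorphic_on UNIV \<and> (\<exists>z. D z \<noteq> 0)"
    using gen_field_fraction[OF _ assms(1)] assms(2) by blast
  from choice[OF this] obtain N where "\<forall>i. \<exists>D. i < K \<longrightarrow> h i = (\<lambda>z. N i z / D z) \<and>
    N i \<in> poly_funs k u \<and> D \<in> poly_funs k u \<and> D holomorphic_on UNIV \<and> (\<exists>z. D z \<noteq> 0)"
    by blast
  from choice[OF this] obtain D where ND: "\<forall>i<K. h i = (\<lambda>z. N i z / D i z) \<and>
    N i \<in> poly_funs k u \<and> D i \<in> poly_funs k u \<and> D i holomorphic_on UNIV \<and> (\<exists>z. D i z \<noteq> 0)"
    by blast
  obtain e1 where "\<forall>i<K. N i \<in> poly_span k u e1"
    using poly_funs_common_degree[of K N] ND by blast
  moreover obtain e2 where "\<forall>i<K. D i \<in> poly_span k u e2"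
    using poly_funs_common_degree[of K D] ND by blast
  moreover have "poly_span k u e1 \<subseteq> poly_span k u (e1 + e2)" "poly_span k u e2 \<subseteq> poly_span k u (e1 + e2)"
    by (simp_all add: poly_span_mono)
  ultimately show ?thesis using ND by blast
qed

lemma gen_field_affine: "(\<lambda>z. c0 + (\<Sum>j<n. c j * g j z)) \<in> gen_field n g"
proof -
  define e :: "nat \<Rightarrow> nat \<Rightarrow> nat" where "e j = (\<lambda>i. if i = j then 1 else 0)" for j
  have e_inj: "inj e" by (auto simp: inj_def e_def fun_eq_iff split: if_splits)
  have e_ne_0: "e j \<noteq> (\<lambda>_. 0)" for j by (auto simp: e_def fun_eq_iff)
  define S where "S = insert (\<lambda>_. 0) (e ` {..<n})"
  define P where "P a = (if a = (\<lambda>_. 0) then c0 else (\<Sum>j<n. if a = e j then c j else 0))" for a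
  define Q :: "(nat \<Rightarrow> nat) \<Rightarrow> complex" where "Q a = (if a = (\<lambda>_. 0) then 1 else 0)" for a
  have P_e: "P (e j) = c j" if "j < n" for j
    using that e_ne_0 inj_eq[OF e_inj] by (simp add: P_def if_distrib sum.delta cong: if_cong)
  have supp_P: "{a. P a \<noteq> 0} \<subseteq> S"
    by (auto simp: P_def S_def split: if_splits elim!: sum.not_neutral_contains_not_neutral)
  have supp_Q: "{a. Q a \<noteq> 0} \<subseteq> {\<lambda>_. 0}" by (auto simp: Q_def)
  have finS: "finite S" by (simp add: S_def)
  have in_range: "a i = 0" if "a \<in> S" "n \<le> i" for a i using that by (auto simp: S_def e_def)
  have "is_mpoly n P" "is_mpoly n Q"
    unfolding is_mpoly_def using finite_subset[OF supp_P finS] finite_subset[OF supp_Q]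
      supp_P supp_Q in_range by blast+
  moreover have "mpoly_eval n Q x = 1" for x
    by (simp add: mpoly_eval_superset[OF _ supp_Q] Q_def)
  moreover have "mpoly_eval n P x = c0 + (\<Sum>j<n. c j * x j)" for x
  proof -
    have "(\<Prod>i<n. x i ^ e j i) = x j" if "j < n" for j
      using that by (simp add: e_def if_distrib prod.delta cong: if_cong)
    then have "(\<Sum>a\<in>e ` {..<n}. P a * (\<Prod>i<n. x i ^ a i)) = (\<Sum>j<n. c j * x j)"
      by (simp add: sum.reindex[OF inj_on_subset[OF e_inj]] P_e)
    moreover have "(\<lambda>_. 0) \<notin> e ` {..<n}" using e_ne_0 by (metis imageE)
    ultimately show ?thesis
      by (simp add: mpoly_eval_superset[OF finS supp_P] S_def P_def)
  qed
  ultimately show ?thesis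
    unfolding gen_field_def by (intro CollectI exI[of _ P] exI[of _ Q]) auto
qed

lemma box_count_inequality:
  fixes k e n :: nat
  assumes "n = ((k + 1) * (e + 1)) ^ k + 1"
  shows "((k + 1) * n * e + 1) ^ k < (n + 1) ^ (k + 1)"
proof -
  define c where "c = (k + 1) * (e + 1)"
  have "(k + 1) * n * e + 1 \<le> c * n"
    using assms by (simp add: c_def algebra_simps)
  then have "((k + 1) * n * e + 1) ^ k \<le> c ^ k * n ^ k"
    by (metis power_mono power_mult_distrib zero_le)
  also have "\<dots> < n * n ^ k"
    using assms by (intro mult_strict_right_mono) (auto simp: c_def)
  also have "\<dots> = n ^ (k + 1)" by simp
  also have "\<dots> < (n + 1) ^ (k + 1)" by (rule power_strict_mono) auto
  finally show ?thesis .
qed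

lemma homogeneous_relation:
  assumes "\<forall>i<Suc k. N i \<in> poly_span k u e \<and> D i \<in> poly_span k u e"
  shows "\<exists>n c. (\<exists>a\<in>exp_box (Suc k) n. c a \<noteq> 0) \<and>
    (\<forall>z. (\<Sum>a\<in>exp_box (Suc k) n. c a * (\<Prod>i<Suc k. N i z ^ a i * D i z ^ (n - a i))) = 0)"
proof -
  define n where "n = ((k + 1) * (e + 1)) ^ k + 1"
  define d where "d = (k + 1) * n * e"
  define A where "A = exp_box (Suc k) n"
  define B where "B = monomial_fun k u ` exp_box k d"
  define \<Phi> where "\<Phi> a = (\<lambda>z. \<Prod>i<Suc k. N i z ^ a i * D i z ^ (n - a i))" for a
  have "card B < card A"
    using card_monomial_image_le[of k u d] box_count_inequality[OF n_def]
    by (simp add: A_def B_def d_def card_exp_box)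
  moreover have "\<Phi> ` A \<subseteq> fun_vs.span B"
  proof
    fix f assume "f \<in> \<Phi> ` A"
    then obtain a where a: "a \<in> A" "f = \<Phi> a" by auto
    have "\<Phi> a \<in> poly_span k u (\<Sum>i<Suc k. a i * e + (n - a i) * e)"
      unfolding \<Phi>_def using assms by (intro poly_span_prod poly_span_mult poly_span_power) auto
    also have "(\<Sum>i<Suc k. a i * e + (n - a i) * e) = (\<Sum>i<Suc k. n * e)"
      using a(1) by (intro sum.cong) (auto simp: A_def exp_box_def simp flip: add_mult_distrib)
    also have "\<dots> = d" by (simp add: d_def algebra_simps)
    finally show "f \<in> fun_vs.span B" using a by (simp add: poly_span_def B_def)
  qed
  ultimately show ?thesis
    using vanishing_combination_if_card_gt[of A B \<Phi>] finite_exp_box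
    unfolding A_def B_def \<Phi>_def by blast
qed

lemma prod_clear_denominators:
  fixes N D :: "nat \<Rightarrow> complex"
  assumes "\<forall>i<K. D i \<noteq> 0" "a \<in> exp_box K n"
  shows "(\<Prod>i<K. N i ^ a i * D i ^ (n - a i)) = (\<Prod>i<K. D i) ^ n * (\<Prod>i<K. (N i / D i) ^ a i)"
proof -
  have "N i ^ a i * D i ^ (n - a i) = D i ^ n * (N i / D i) ^ a i" if "i < K" for i
  proof -
    have "D i ^ n = D i ^ a i * D i ^ (n - a i)"
      using assms(2) that by (simp add: exp_box_def flip: power_add)
    then show ?thesis using assms(1) that by (simp add: power_divide)
  qed
  then show ?thesis by (simp add: prod.distrib prod_power_distrib)
qed

lemma box_mpoly:
  assumes "K \<le> m"
  shows "is_mpoly m (\<lambda>a. if a \<in> exp_box K n then c a else 0)"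
    and "mpoly_eval m (\<lambda>a. if a \<in> exp_box K n then c a else 0) x =
      (\<Sum>a\<in>exp_box K n. c a * (\<Prod>i<K. x i ^ a i))"
proof -
  have supp: "{a. (if a \<in> exp_box K n then c a else 0) \<noteq> 0} \<subseteq> exp_box K n" by auto
  show "is_mpoly m (\<lambda>a. if a \<in> exp_box K n then c a else 0)"
    unfolding is_mpoly_def using finite_subset[OF supp finite_exp_box] assms
    by (auto simp: exp_box_def split: if_splits)
  have "(\<Prod>i<m. x i ^ a i) = (\<Prod>i<K. x i ^ a i)" if "a \<in> exp_box K n" for a
    using assms that by (intro prod.mono_neutral_right) (auto simp: exp_box_def)
  then show "mpoly_eval m (\<lambda>a. if a \<in> exp_box K n then c a else 0) x =
      (\<Sum>a\<in>exp_box K n. c a * (\<Prod>i<K. x i ^ a i))"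
    by (simp add: mpoly_eval_superset[OF finite_exp_box supp])
qed

lemma box_mpoly_eval_fractions:
  fixes N D :: "nat \<Rightarrow> complex"
  assumes "K \<le> m" "\<forall>i<K. D i \<noteq> 0" "\<forall>i<K. x i = N i / D i"
  shows "(\<Prod>i<K. D i) ^ n * mpoly_eval m (\<lambda>a. if a \<in> exp_box K n then c a else 0) x =
    (\<Sum>a\<in>exp_box K n. c a * (\<Prod>i<K. N i ^ a i * D i ^ (n - a i)))"
  unfolding box_mpoly(2)[OF assms(1)] sum_distrib_left
proof (intro sum.cong refl)
  fix a assume "a \<in> exp_box K n"
  note clear = prod_clear_denominators[OF assms(2) this, of N]
  have "(\<Prod>i<K. x i ^ a i) = (\<Prod>i<K. (N i / D i) ^ a i)" using assms(3) by simp
  then show "(\<Prod>i<K. D i) ^ n * (c a * (\<Prod>i<K. x i ^ a i)) = c a * (\<Prod>i<K. N i ^ a i * D i ^ (n - a i))"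
    by (subst clear) (simp only: mult.left_commute)
qed

lemma not_alg_indep_gen_field:
  assumes g: "\<forall>i<n. g i holomorphic_on UNIV \<and> g i \<in> poly_funs k u"
    and h: "\<forall>i<m. h i \<in> gen_field n g" and "k < m"
  shows "\<not> alg_indep m h"
proof -
  from h \<open>k < m\<close> have "\<forall>i<Suc k. h i \<in> gen_field n g" by simp
  from gen_field_common_fractions[OF g this] obtain N D e where ND: "\<forall>i<Suc k. h i = (\<lambda>z. N i z / D i z) \<and>
    N i \<in> poly_span k u e \<and> D i \<in> poly_span k u e \<and> D i holomorphic_on UNIV \<and> (\<exists>z. D i z \<noteq> 0)"
    by blast
  then obtain d c where c: "\<exists>a\<in>exp_box (Suc k) d. c a \<noteq> 0"
    "\<And>z. (\<Sum>a\<in>exp_box (Suc k) d. c a * (\<Prod>i<Suc k. N i z ^ a i * D i z ^ (d - a i))) = 0"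
    using homogeneous_relation[of k N u e D] by blast
  define P where "P = (\<lambda>a. if a \<in> exp_box (Suc k) d then c a else 0)"
  have P: "is_mpoly m P" "\<exists>a. P a \<noteq> 0"
    using box_mpoly(1)[of "Suc k" m d c] c(1) \<open>k < m\<close> by (auto simp: P_def)
  have "mpoly_eval m P (\<lambda>i. h i z) = 0" if z: "\<forall>i<Suc k. D i z \<noteq> 0" for z
  proof -
    have "(\<Prod>i<Suc k. D i z) ^ d * mpoly_eval m P (\<lambda>i. h i z) =
        (\<Sum>a\<in>exp_box (Suc k) d. c a * (\<Prod>i<Suc k. N i z ^ a i * D i z ^ (d - a i)))"
      unfolding P_def using ND z \<open>k < m\<close> by (intro box_mpoly_eval_fractions) auto
    also have "\<dots> = 0" by (rule c(2))
    finally have "(\<Prod>i<Suc k. D i z) ^ d * mpoly_eval m P (\<lambda>i. h i z) = 0" .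
    moreover have "(\<Prod>i<Suc k. D i z) \<noteq> 0" using z by simp
    ultimately show ?thesis by simp
  qed
  then have "{z. mpoly_eval m P (\<lambda>i. h i z) \<noteq> 0} \<subseteq> (\<Union>i<Suc k. {z. D i z = 0})" by blast
  moreover have "countable {z. D i z = 0}" if "i < Suc k" for i
    using ND that countable_zeros_entire by blast
  then have "countable (\<Union>i<Suc k. {z. D i z = 0})" by (intro countable_UN) auto
  ultimately show ?thesis
    unfolding alg_indep_def using P countable_subset by blast
qed

lemma trdeg_eqI:
  assumes "\<forall>i<k. h i \<in> gen_field n g" "alg_indep k h"
    and "\<And>m h. \<forall>i<m. h i \<in> gen_field n g \<Longrightarrow> k < m \<Longrightarrow> \<not> alg_indep m h"
  shows "trdeg n g = k"
  unfolding trdeg_def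
proof (rule cSup_eq_maximum)
  show "k \<in> {m. \<exists>h. (\<forall>i<m. h i \<in> gen_field n g) \<and> alg_indep m h}" using assms(1,2) by blast
  show "m \<le> k" if "m \<in> {m. \<exists>h. (\<forall>i<m. h i \<in> gen_field n g) \<and> alg_indep m h}" for m
    using that assms(3) not_less by blast
qed

lemma trdeg_eq_if_poly_in_alg_indep:
  assumes "\<forall>i<n. g i holomorphic_on UNIV \<and> g i \<in> poly_funs k u"
    and "\<forall>i<k. u i \<in> gen_field n g" "alg_indep k u"
  shows "trdeg n g = k"
  using assms not_alg_indep_gen_field[OF assms(1)] by (intro trdeg_eqI) auto

section \<open>Algebraic independence of \<open>z\<close>, \<open>e\<^sup>z\<close> and \<open>e\<^sup>e\<^sup>z\<close>\<close>

lemma dominant_sum_eventually_nonzero: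
  fixes r :: "'b \<Rightarrow> 'a \<Rightarrow> real" and c :: "'b \<Rightarrow> complex"
  assumes "finite S" "b \<in> S" "c b \<noteq> 0" "eventually (\<lambda>t. r b t \<noteq> 0) F"
    and "\<And>a. a \<in> S - {b} \<Longrightarrow> ((\<lambda>t. r a t / r b t) \<longlongrightarrow> 0) F"
  shows "eventually (\<lambda>t. (\<Sum>a\<in>S. c a * of_real (r a t)) \<noteq> 0) F"
proof -
  have "((\<lambda>t. c a * of_real (r a t / r b t)) \<longlongrightarrow> (if a = b then c b else 0)) F" if "a \<in> S" for a
  proof (cases "a = b")
    case True
    have "eventually (\<lambda>t. c b = c a * of_real (r a t / r b t)) F"
      using assms(4) by eventually_elim (simp add: True)
    then show ?thesis using True by (auto intro: Lim_transform_eventually[OF tendsto_const])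
  next
    case False
    with that have "((\<lambda>t. of_real (r a t / r b t)) \<longlongrightarrow> (of_real 0 :: complex)) F"
      by (intro tendsto_of_real assms(5)) auto
    from tendsto_mult[OF tendsto_const this, of "c a"] False show ?thesis by simp
  qed
  then have "((\<lambda>t. \<Sum>a\<in>S. c a * of_real (r a t / r b t)) \<longlongrightarrow> (\<Sum>a\<in>S. if a = b then c b else 0)) F"
    by (rule tendsto_sum)
  also have "(\<Sum>a\<in>S. if a = b then c b else 0) = c b" using assms(1,2) by simp
  finally have "((\<lambda>t. \<Sum>a\<in>S. c a * of_real (r a t / r b t)) \<longlongrightarrow> c b) F" .
  then have "eventually (\<lambda>t. (\<Sum>a\<in>S. c a * of_real (r a t / r b t)) \<noteq> 0) F"
    using assms(3) tendsto_imp_eventually_ne by blast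
  with assms(4) show ?thesis
  proof eventually_elim
    case (elim t)
    have "(\<Sum>a\<in>S. c a * of_real (r a t)) = of_real (r b t) * (\<Sum>a\<in>S. c a * of_real (r a t / r b t))"
      using elim(1) by (simp add: sum_distrib_left field_simps)
    with elim show ?case by simp
  qed
qed

lemma exists_lex_max_exponent:
  fixes S :: "(nat \<Rightarrow> nat) set"
  assumes "finite S" "S \<noteq> {}" "\<forall>a\<in>S. \<forall>i\<ge>3. a i = 0"
  shows "\<exists>b\<in>S. \<forall>a\<in>S - {b}. a 2 < b 2 \<or> a 2 = b 2 \<and> a 1 < b 1 \<or> a 2 = b 2 \<and> a 1 = b 1 \<and> a 0 < b 0"
proof -
  define S2 where "S2 = {a\<in>S. a 2 = Max ((\<lambda>a. a 2) ` S)}"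
  define S1 where "S1 = {a\<in>S2. a 1 = Max ((\<lambda>a. a 1) ` S2)}"
  have fin: "finite S2" "finite S1" using assms(1) by (auto simp: S1_def S2_def)
  have "Max ((\<lambda>a. a 2) ` S) \<in> (\<lambda>a. a 2) ` S" using assms(1,2) by simp
  then have "S2 \<noteq> {}" by (force simp: S2_def)
  then have "Max ((\<lambda>a. a 1) ` S2) \<in> (\<lambda>a. a 1) ` S2" using fin by simp
  then have "S1 \<noteq> {}" by (force simp: S1_def)
  then have "Max ((\<lambda>a. a 0) ` S1) \<in> (\<lambda>a. a 0) ` S1" using fin by simp
  then obtain b where b: "b \<in> S1" "b 0 = Max ((\<lambda>a. a 0) ` S1)" by force
  then have "b \<in> S" by (simp add: S1_def S2_def)
  have "a 2 < b 2 \<or> a 2 = b 2 \<and> a 1 < b 1 \<or> a 2 = b 2 \<and> a 1 = b 1 \<and> a 0 < b 0"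
    if a: "a \<in> S" "a \<noteq> b" for a
  proof -
    have "a 2 \<le> b 2" "a 2 = b 2 \<Longrightarrow> a 1 \<le> b 1" "a 2 = b 2 \<Longrightarrow> a 1 = b 1 \<Longrightarrow> a 0 \<le> b 0"
      using a b fin assms(1) by (auto simp: S1_def S2_def)
    moreover have "\<not> (a 2 = b 2 \<and> a 1 = b 1 \<and> a 0 = b 0)"
    proof
      assume "a 2 = b 2 \<and> a 1 = b 1 \<and> a 0 = b 0"
      moreover have "a i = 0" "b i = 0" if "i \<ge> 3" for i
        using a(1) \<open>b \<in> S\<close> assms(3) that by blast+
      ultimately have "a i = b i" for i
        by (cases "i \<ge> 3") (auto simp: numeral_eq_Suc less_Suc_eq not_le)
      with a show False by auto
    qed
    ultimately show ?thesis by linarith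
  qed
  with \<open>b \<in> S\<close> show ?thesis by blast
qed

definition tower_monomial :: "(nat \<Rightarrow> nat) \<Rightarrow> real \<Rightarrow> real" where
  "tower_monomial a t = t ^ a 0 * exp t ^ a 1 * exp (exp t) ^ a 2"

lemma tower_monomial_pos: "t > 0 \<Longrightarrow> tower_monomial a t > 0"
  by (simp add: tower_monomial_def)

lemma tower_ratio_tendsto_0_exp_exp:
  assumes "a 2 < b 2"
  shows "((\<lambda>t. tower_monomial a t / tower_monomial b t) \<longlongrightarrow> 0) at_top"
proof (rule Lim_null_comparison)
  show "((\<lambda>t. exp t ^ (a 0 + a 1) / exp (exp t)) \<longlongrightarrow> (0::real)) at_top"
    by (rule filterlim_compose[OF tendsto_power_div_exp_0 exp_at_top])
  show "\<forall>\<^sub>F t in at_top. norm (tower_monomial a t / tower_monomial b t) \<le> exp t ^ (a 0 + a 1) / exp (exp t)"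
    using eventually_ge_at_top[of "1::real"]
  proof eventually_elim
    case (elim t)
    have "exp (exp t) ^ a 2 * exp (exp t) = exp (exp t) ^ Suc (a 2)" by simp
    also have "\<dots> \<le> exp (exp t) ^ b 2" using assms by (intro power_increasing) auto
    finally have "exp (exp t) ^ a 2 * exp (exp t) \<le> tower_monomial b t"
      using elim unfolding tower_monomial_def
      by (smt (verit) mult_left_mono one_le_power one_le_exp_iff mult_cancel_right1
          mult_right_mono exp_ge_zero zero_le_power mult_nonneg_nonneg)
    then have "norm (tower_monomial a t / tower_monomial b t)
        \<le> tower_monomial a t / (exp (exp t) ^ a 2 * exp (exp t))"
      using elim tower_monomial_pos[of t] by (simp add: divide_left_mono less_imp_le)
    also have "\<dots> = t ^ a 0 * exp t ^ a 1 / exp (exp t)" by (simp add: tower_monomial_def)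
    also have "\<dots> \<le> exp t ^ a 0 * exp t ^ a 1 / exp (exp t)"
      using elim by (intro divide_right_mono mult_right_mono power_mono) (auto intro: less_imp_le[OF exp_gt_self])
    also have "\<dots> = exp t ^ (a 0 + a 1) / exp (exp t)" by (simp add: power_add)
    finally show ?case .
  qed
qed

lemma tower_ratio_tendsto_0_exp:
  assumes "a 2 = b 2" "a 1 < b 1"
  shows "((\<lambda>t. tower_monomial a t / tower_monomial b t) \<longlongrightarrow> 0) at_top"
proof (rule Lim_null_comparison)
  show "((\<lambda>t. t ^ a 0 / exp t) \<longlongrightarrow> (0::real)) at_top" by (rule tendsto_power_div_exp_0)
  show "\<forall>\<^sub>F t in at_top. norm (tower_monomial a t / tower_monomial b t) \<le> t ^ a 0 / exp t"
    using eventually_ge_at_top[of "1::real"]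
  proof eventually_elim
    case (elim t)
    have "exp t ^ a 1 * exp t = exp t ^ Suc (a 1)" by simp
    also have "\<dots> \<le> exp t ^ b 1" using assms elim by (intro power_increasing) auto
    finally have "exp t ^ a 1 * exp t * exp (exp t) ^ a 2 \<le> tower_monomial b t"
      using elim assms(1) unfolding tower_monomial_def
      by (smt (verit) mult_left_mono one_le_power one_le_exp_iff mult_cancel_right1
          mult_right_mono exp_ge_zero zero_le_power mult_nonneg_nonneg)
    then have "norm (tower_monomial a t / tower_monomial b t)
        \<le> tower_monomial a t / (exp t ^ a 1 * exp t * exp (exp t) ^ a 2)"
      using elim tower_monomial_pos[of t] by (simp add: divide_left_mono less_imp_le)
    also have "\<dots> = t ^ a 0 / exp t" by (simp add: tower_monomial_def)
    finally show ?case .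
  qed
qed

lemma tower_ratio_tendsto_0_power:
  assumes "a 2 = b 2" "a 1 = b 1" "a 0 < b 0"
  shows "((\<lambda>t. tower_monomial a t / tower_monomial b t) \<longlongrightarrow> 0) at_top"
proof (rule Lim_null_comparison)
  show "((\<lambda>t. inverse t) \<longlongrightarrow> (0::real)) at_top"
    by (rule tendsto_inverse_0_at_top[OF filterlim_ident])
  show "\<forall>\<^sub>F t in at_top. norm (tower_monomial a t / tower_monomial b t) \<le> inverse t"
    using eventually_ge_at_top[of "1::real"]
  proof eventually_elim
    case (elim t)
    have "t ^ a 0 * t = t ^ Suc (a 0)" by simp
    also have "\<dots> \<le> t ^ b 0" using assms elim by (intro power_increasing) auto
    finally have "t ^ a 0 * t * exp t ^ a 1 * exp (exp t) ^ a 2 \<le> tower_monomial b t"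
      using elim assms(1,2) unfolding tower_monomial_def by (simp add: mult_right_mono)
    then have "norm (tower_monomial a t / tower_monomial b t)
        \<le> tower_monomial a t / (t ^ a 0 * t * exp t ^ a 1 * exp (exp t) ^ a 2)"
      using elim tower_monomial_pos[of t] by (simp add: divide_left_mono less_imp_le)
    also have "\<dots> = inverse t" using elim by (simp add: tower_monomial_def field_simps)
    finally show ?case .
  qed
qed

lemma tower_ratio_tendsto_0:
  assumes "a 2 < b 2 \<or> a 2 = b 2 \<and> a 1 < b 1 \<or> a 2 = b 2 \<and> a 1 = b 1 \<and> a 0 < b 0"
  shows "((\<lambda>t. tower_monomial a t / tower_monomial b t) \<longlongrightarrow> 0) at_top"
  using assms tower_ratio_tendsto_0_exp_exp tower_ratio_tendsto_0_exp tower_ratio_tendsto_0_power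
  by blast

definition exp_tower :: "nat \<Rightarrow> complex \<Rightarrow> complex" where
  "exp_tower = (\<lambda>i. [\<lambda>z. z, exp, \<lambda>z. exp (exp z)] ! i)"

lemma mpoly_eval_exp_tower_of_real:
  "mpoly_eval 3 P (\<lambda>i. exp_tower i (of_real t)) = (\<Sum>a\<in>{a. P a \<noteq> 0}. P a * of_real (tower_monomial a t))"
  unfolding mpoly_eval_def
  by (intro sum.cong refl) (simp add: tower_monomial_def exp_tower_def eval_nat_numeral lessThan_Suc exp_of_real)

lemma exp_tower_mpoly_eventually_nonzero:
  assumes "is_mpoly 3 P" "\<exists>a. P a \<noteq> 0"
  shows "eventually (\<lambda>t. mpoly_eval 3 P (\<lambda>i. exp_tower i (of_real t)) \<noteq> 0) at_top"
proof -
  define S where "S = {a. P a \<noteq> 0}"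
  have S: "finite S" "S \<noteq> {}" "\<forall>a\<in>S. \<forall>i\<ge>3. a i = 0"
    using assms by (auto simp: S_def is_mpoly_def)
  then obtain b where "b \<in> S" and lex:
    "\<forall>a\<in>S - {b}. a 2 < b 2 \<or> a 2 = b 2 \<and> a 1 < b 1 \<or> a 2 = b 2 \<and> a 1 = b 1 \<and> a 0 < b 0"
    using exists_lex_max_exponent by blast
  have "eventually (\<lambda>t. tower_monomial b t \<noteq> 0) at_top"
    using eventually_gt_at_top[of 0] by eventually_elim (simp add: tower_monomial_pos less_imp_neq[symmetric])
  with S(1) \<open>b \<in> S\<close> lex show ?thesis
    unfolding mpoly_eval_exp_tower_of_real S_def[symmetric]
    by (intro dominant_sum_eventually_nonzero tower_ratio_tendsto_0) (auto simp: S_def)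
qed

lemma alg_indep_exp_tower: "alg_indep 3 exp_tower"
  unfolding alg_indep_def
proof (intro allI impI, elim conjE)
  fix P assume "is_mpoly 3 P" "\<exists>a. P a \<noteq> 0"
  from exp_tower_mpoly_eventually_nonzero[OF this] obtain T
    where T: "\<And>t. t \<ge> T \<Longrightarrow> mpoly_eval 3 P (\<lambda>i. exp_tower i (of_real t)) \<noteq> 0"
    unfolding eventually_at_top_linorder by blast
  have "complex_of_real ` {T<..<T + 1} \<subseteq> {z. mpoly_eval 3 P (\<lambda>i. exp_tower i z) \<noteq> 0}"
    using T by auto
  moreover have "uncountable (complex_of_real ` {T<..<T + 1})"
    using countable_image_inj_on[of complex_of_real "{T<..<T + 1}"] uncountable_open_interval[of T "T + 1"]
    by (auto simp: inj_on_def)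
  ultimately show "uncountable {z. mpoly_eval 3 P (\<lambda>i. exp_tower i z) \<noteq> 0}"
    using countable_subset by blast
qed

section \<open>The field generated by \<open>e\<^sup>z + z\<close>, \<open>e\<^sup>z + 1\<close> and their exponentials\<close>

definition exp_generators :: "nat \<Rightarrow> complex \<Rightarrow> complex" where
  "exp_generators = (\<lambda>i. [\<lambda>z. exp z + z, \<lambda>z. exp z + 1, exp \<circ> (\<lambda>z. exp z + z), exp \<circ> (\<lambda>z. exp z + 1)] ! i)"

lemma exp_generators_entire_poly:
  assumes "i < 4"
  shows "exp_generators i holomorphic_on UNIV \<and> exp_generators i \<in> poly_funs 3 exp_tower"
proof
  have i: "i = 0 \<or> i = 1 \<or> i = 2 \<or> i = 3" using assms by auto
  then show "exp_generators i holomorphic_on UNIV"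
    by (auto simp: exp_generators_def o_def intro!: holomorphic_intros)
  have var: "exp_tower j \<in> poly_span 3 exp_tower 1" if "j < 3" for j
    using that by (rule poly_span_var)
  then have var2: "exp_tower j \<in> poly_span 3 exp_tower 2" if "j < 3" for j
    using that poly_span_mono[of 1 2 3 exp_tower] by fastforce
  have prod12: "(\<lambda>z. exp_tower 1 z * exp_tower 2 z) \<in> poly_span 3 exp_tower 2"
    using poly_span_mult[OF var[of 1] var[of 2]] by (simp add: numeral_2_eq_2)
  have "exp_generators 0 = (\<lambda>z. exp_tower 1 z + exp_tower 0 z)"
    "exp_generators 1 = (\<lambda>z. exp_tower 1 z + 1)"
    "exp_generators 2 = (\<lambda>z. exp_tower 1 z * exp_tower 2 z)"
    "exp_generators 3 = (\<lambda>z. exp 1 * exp_tower 2 z)"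
    by (simp_all add: exp_generators_def exp_tower_def eval_nat_numeral exp_add fun_eq_iff algebra_simps)
  then have "exp_generators i \<in> poly_span 3 exp_tower 2"
    using i var2[of 0] var2[of 1] var2[of 2] prod12
    by (auto intro!: poly_span_add poly_span_const poly_span_scale)
  then show "exp_generators i \<in> poly_funs 3 exp_tower" by (auto simp: poly_funs_def)
qed

lemma exp_tower_in_gen_field:
  assumes "i < 3"
  shows "exp_tower i \<in> gen_field 4 exp_generators"
proof -
  have sum4: "(\<Sum>j<4. c j * exp_generators j z) =
      c 0 * (exp z + z) + c 1 * (exp z + 1) + c 2 * exp (exp z + z) + c 3 * exp (exp z + 1)" for c z
    by (simp add: exp_generators_def eval_nat_numeral lessThan_Suc)
  have "exp_tower 0 = (\<lambda>z. 1 + (\<Sum>j<4. [1, -1, 0, 0] ! j * exp_generators j z))"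
    "exp_tower 1 = (\<lambda>z. -1 + (\<Sum>j<4. [0, 1, 0, 0] ! j * exp_generators j z))"
    "exp_tower 2 = (\<lambda>z. 0 + (\<Sum>j<4. [0, 0, 0, exp (-1)] ! j * exp_generators j z))"
    unfolding sum4 by (simp_all add: exp_tower_def fun_eq_iff exp_add exp_minus field_simps)
  moreover have "i = 0 \<or> i = 1 \<or> i = 2" using assms by auto
  ultimately show ?thesis by (metis gen_field_affine)
qed

theorem mainTheorem12:
  fixes f1 f2 F :: "complex \<Rightarrow> complex"
  assumes "f1 = (\<lambda>z. exp z + z)" and "f2 = (\<lambda>z. exp z + 1)" and "F = exp"
  shows "trdeg 4 (\<lambda>i. [f1, f2, F \<circ> f1, F \<circ> f2] ! i) = 3"
proof -
  have "(\<lambda>i. [f1, f2, F \<circ> f1, F \<circ> f2] ! i) = exp_generators"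
    using assms by (simp add: exp_generators_def)
  moreover have "trdeg 4 exp_generators = 3"
    using exp_generators_entire_poly exp_tower_in_gen_field alg_indep_exp_tower
    by (intro trdeg_eq_if_poly_in_alg_indep) auto
  ultimately show ?thesis by simp
qed

end
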